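(* Let $\zeta_5=\exp(2\pi i/5)$, $K=\mathbb{Q}(\zeta_5)\subset\mathbb{C}$, $\mathcal{O}_K=\mathbb{Z}[\zeta_5]$, let $\sigma:K\to\mathbb{C}$ be the embedding with $\sigma(\zeta_5)=\zeta_5^2$, and let $\mathcal{S}=\{z\in\mathcal{O}_K : |\sigma(z)|\le 1\}$. If $z_1,z_2\in\mathcal{S}$ with $z_1\neq z_2$, then $|z_1-z_2|\ge\frac{\sqrt5-1}{2}$.
   Context: Elements of $K$ are regarded as complex numbers via the inclusion $K\subset\mathbb{C}$. *)

theory Defs
  imports Complex_Main
begin

definition zeta5 :: complex where
  "zeta5 = exp (2 * of_real pi * \<i> / 5)"

text \<open>Elements of O_K = Z[zeta5], written in the integral basis 1, zeta5, zeta5^2, zeta5^3.\<close>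
definition OK_elem :: "(nat \<Rightarrow> int) \<Rightarrow> complex" where
  "OK_elem a = (\<Sum>i<4. of_int (a i) * zeta5 ^ i)"

definition sigma_elem :: "(nat \<Rightarrow> int) \<Rightarrow> complex" where
  "sigma_elem a = (\<Sum>i<4. of_int (a i) * (zeta5 ^ 2) ^ i)"

definition OK :: "complex set" where
  "OK = range OK_elem"

definition S_set :: "complex set" where
  "S_set = {z. \<exists>a. z = OK_elem a \<and> cmod (sigma_elem a) \<le> 1}"

end

theory Submission imports Defs begin

text \<open>
  Put \<open>r = (\<surd>5 - 1)/2\<close>, so that \<open>r\<^sup>2 = 1 - r\<close>. For a primitive fifth root of unity \<open>u\<close> and
  integers \<open>a\<^sub>i\<close>, \<open>|\<Sum> a\<^sub>i u\<^sup>i|\<^sup>2 = m + n (u + u\<^sup>4)\<close> with integers \<open>m, n\<close> independent of \<open>u\<close>,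
  and \<open>u + u\<^sup>4\<close> is \<open>r\<close> for \<open>u = \<zeta>\<^sub>5\<close> and \<open>-1 - r\<close> for \<open>u = \<zeta>\<^sub>5\<^sup>2\<close>. Hence for \<open>z = z\<^sub>1 - z\<^sub>2\<close>
  we get \<open>|z|\<^sup>2 = m + n r > 0\<close> and \<open>|\<sigma> z|\<^sup>2 = m + n (-1 - r) \<in> [0, 4]\<close>. The two numbers differ
  by \<open>n \<surd>5\<close>, which forces \<open>n \<in> {-1, 0}\<close>, and in both cases \<open>m + n r \<ge> 1 - r = r\<^sup>2\<close>.
\<close>

definition inv_golden_ratio :: real where
  "inv_golden_ratio = (sqrt 5 - 1) / 2"

lemma inv_golden_ratio_sq: "inv_golden_ratio\<^sup>2 = 1 - inv_golden_ratio"
  unfolding inv_golden_ratio_def by (simp add: power2_eq_square field_simps)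

lemma inv_golden_ratio_bounds: "1/2 < inv_golden_ratio" "inv_golden_ratio < 1"
proof -
  have "2 < sqrt 5" by (rule real_less_rsqrt) simp
  moreover have "sqrt 5 < 3" by (rule real_less_lsqrt) auto
  ultimately show "1/2 < inv_golden_ratio" "inv_golden_ratio < 1"
    unfolding inv_golden_ratio_def by auto
qed

lemma quadratic_root_inv_golden_ratio:
  fixes t :: real
  assumes "t\<^sup>2 + t - 1 = 0"
  shows "t = inv_golden_ratio \<or> t = - 1 - inv_golden_ratio"
proof -
  have "(t - inv_golden_ratio) * (t + 1 + inv_golden_ratio) = 0"
    using assms inv_golden_ratio_sq by (simp add: algebra_simps power2_eq_square)
  then show ?thesis unfolding mult_eq_0_iff by linarith
qed

lemma fifth_root_sum_powers:
  fixes u :: complex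
  assumes "u ^ 5 = 1" "u \<noteq> 1"
  shows "1 + u + u\<^sup>2 + u ^ 3 + u ^ 4 = 0"
proof -
  have "(u - 1) * (1 + u + u\<^sup>2 + u ^ 3 + u ^ 4) = u ^ 5 - 1" by algebra
  with assms show ?thesis by simp
qed

lemma cnj_fifth_root:
  fixes u :: complex
  assumes "u ^ 5 = 1"
  shows "cnj u = u ^ 4"
proof -
  have "cmod u ^ 5 = 1" using assms by (metis norm_one norm_power)
  then have "cmod u = 1" using power_eq_imp_eq_base[of "cmod u" 5 1] by simp
  then have "u * cnj u = 1" using complex_norm_square[of u] by simp
  moreover have "u * u ^ 4 = 1" using assms by (simp add: power_Suc[symmetric] del: power_Suc)
  ultimately show ?thesis by (metis mult.left_commute mult.right_neutral mult.commute)
qed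

lemma fifth_root_add_pow4:
  fixes u :: complex
  assumes "u ^ 5 = 1"
  shows "u + u ^ 4 = of_real (2 * Re u)"
  using complex_add_cnj[of u] cnj_fifth_root[OF assms] by simp

lemma fifth_root_trace_cases:
  fixes u :: complex
  assumes "u ^ 5 = 1" "u \<noteq> 1"
  shows "2 * Re u = inv_golden_ratio \<or> 2 * Re u = - 1 - inv_golden_ratio"
proof (rule quadratic_root_inv_golden_ratio)
  have "(u + u ^ 4)\<^sup>2 + (u + u ^ 4) - 1 = 0"
    using assms(1) fifth_root_sum_powers[OF assms] by algebra
  then have "complex_of_real ((2 * Re u)\<^sup>2 + 2 * Re u - 1) = 0"
    unfolding fifth_root_add_pow4[OF assms(1)] by simp
  then show "(2 * Re u)\<^sup>2 + 2 * Re u - 1 = 0"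
    by (simp only: of_real_eq_0_iff)
qed

lemma norm_sq_fifth_root_combination:
  fixes u :: complex and a :: "nat \<Rightarrow> int"
  assumes "u ^ 5 = 1" "u \<noteq> 1"
  shows "complex_of_real ((cmod (\<Sum>i<4. of_int (a i) * u ^ i))\<^sup>2) =
    of_int ((a 0)\<^sup>2 + (a 1)\<^sup>2 + (a 2)\<^sup>2 + (a 3)\<^sup>2 - (a 0 * a 2 + a 1 * a 3 + a 0 * a 3))
    + of_int (a 0 * a 1 + a 1 * a 2 + a 2 * a 3 - (a 0 * a 2 + a 1 * a 3 + a 0 * a 3)) * (u + u ^ 4)"
proof -
  define s where "s = (\<Sum>i<4. of_int (a i) * u ^ i)"
  have s: "s = of_int (a 0) + of_int (a 1) * u + of_int (a 2) * u\<^sup>2 + of_int (a 3) * u ^ 3"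
    unfolding s_def by (simp add: eval_nat_numeral)
  have "cnj s = of_int (a 0) + of_int (a 1) * u ^ 4 + of_int (a 2) * (u ^ 4)\<^sup>2
      + of_int (a 3) * (u ^ 4) ^ 3"
    unfolding s by (simp add: cnj_fifth_root[OF assms(1)])
  then have "complex_of_real ((cmod s)\<^sup>2) = (of_int (a 0) + of_int (a 1) * u + of_int (a 2) * u\<^sup>2
      + of_int (a 3) * u ^ 3) * (of_int (a 0) + of_int (a 1) * u ^ 4 + of_int (a 2) * (u ^ 4)\<^sup>2
      + of_int (a 3) * (u ^ 4) ^ 3)"
    using complex_norm_square[of s] by (simp only: s)
  also have "\<dots> = of_int ((a 0)\<^sup>2 + (a 1)\<^sup>2 + (a 2)\<^sup>2 + (a 3)\<^sup>2 - (a 0 * a 2 + a 1 * a 3 + a 0 * a 3))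
    + of_int (a 0 * a 1 + a 1 * a 2 + a 2 * a 3 - (a 0 * a 2 + a 1 * a 3 + a 0 * a 3)) * (u + u ^ 4)"
    unfolding of_int_add of_int_diff of_int_mult of_int_power
    using assms(1) fifth_root_sum_powers[OF assms] by algebra
  finally show ?thesis unfolding s_def .
qed

lemma zeta5_eq_cis: "zeta5 = cis (2 * pi / 5)"
  unfolding zeta5_def by (simp add: cis_conv_exp mult.commute)

lemma zeta5_pow_5: "zeta5 ^ 5 = 1"
  unfolding zeta5_eq_cis DeMoivre by simp

lemma zeta5_sq_pow_5: "(zeta5\<^sup>2) ^ 5 = 1"
  by (metis power_mult mult.commute power_one zeta5_pow_5)

lemma Re_zeta5_pos: "Re zeta5 > 0"
  unfolding zeta5_eq_cis using pi_gt_zero by (simp, intro cos_gt_zero_pi) linarith+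

lemma Re_zeta5_sq_neg: "Re (zeta5\<^sup>2) < 0"
proof -
  have "cos (4 * pi / 5) < cos (pi / 2)" by (rule cos_monotone_0_pi) auto
  then show ?thesis unfolding zeta5_eq_cis DeMoivre by simp
qed

lemma zeta5_sq_neq_1: "zeta5\<^sup>2 \<noteq> 1"
  using Re_zeta5_sq_neg by auto

lemma zeta5_neq_1: "zeta5 \<noteq> 1"
  using zeta5_sq_neq_1 by auto

lemma zeta5_trace: "zeta5 + zeta5 ^ 4 = of_real inv_golden_ratio"
proof -
  have "2 * Re zeta5 = inv_golden_ratio"
    using fifth_root_trace_cases[OF zeta5_pow_5 zeta5_neq_1] Re_zeta5_pos inv_golden_ratio_bounds
    by auto
  then show ?thesis by (simp only: fifth_root_add_pow4[OF zeta5_pow_5])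
qed

lemma zeta5_sq_trace: "zeta5\<^sup>2 + (zeta5\<^sup>2) ^ 4 = of_real (- 1 - inv_golden_ratio)"
proof -
  have "2 * Re (zeta5\<^sup>2) = - 1 - inv_golden_ratio"
    using fifth_root_trace_cases[OF zeta5_sq_pow_5 zeta5_sq_neq_1] Re_zeta5_sq_neg
      inv_golden_ratio_bounds
    by auto
  then show ?thesis by (simp only: fifth_root_add_pow4[OF zeta5_sq_pow_5])
qed

lemma OK_elem_diff: "OK_elem a - OK_elem b = OK_elem (\<lambda>i. a i - b i)"
  unfolding OK_elem_def by (simp add: sum_subtractf[symmetric] algebra_simps)

lemma sigma_elem_diff: "sigma_elem a - sigma_elem b = sigma_elem (\<lambda>i. a i - b i)"
  unfolding sigma_elem_def by (simp add: sum_subtractf[symmetric] algebra_simps)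

lemma norm_sq_OK_elem_sigma_elem:
  obtains m n :: int
  where "(cmod (OK_elem a))\<^sup>2 = m + n * inv_golden_ratio"
    and "(cmod (sigma_elem a))\<^sup>2 = m + n * (- 1 - inv_golden_ratio)"
proof
  let ?m = "(a 0)\<^sup>2 + (a 1)\<^sup>2 + (a 2)\<^sup>2 + (a 3)\<^sup>2 - (a 0 * a 2 + a 1 * a 3 + a 0 * a 3)"
  let ?n = "a 0 * a 1 + a 1 * a 2 + a 2 * a 3 - (a 0 * a 2 + a 1 * a 3 + a 0 * a 3)"
  have "complex_of_real ((cmod (OK_elem a))\<^sup>2) = of_real (?m + ?n * inv_golden_ratio)"
    using norm_sq_fifth_root_combination[OF zeta5_pow_5 zeta5_neq_1, of a]
    unfolding OK_elem_def zeta5_trace by simp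
  then show "(cmod (OK_elem a))\<^sup>2 = ?m + ?n * inv_golden_ratio"
    by (simp only: of_real_eq_iff)
  have "complex_of_real ((cmod (sigma_elem a))\<^sup>2) = of_real (?m + ?n * (- 1 - inv_golden_ratio))"
    using norm_sq_fifth_root_combination[OF zeta5_sq_pow_5 zeta5_sq_neq_1, of a]
    unfolding sigma_elem_def zeta5_sq_trace by simp
  then show "(cmod (sigma_elem a))\<^sup>2 = ?m + ?n * (- 1 - inv_golden_ratio)"
    by (simp only: of_real_eq_iff)
qed

lemma golden_integer_gap:
  fixes m n :: int
  assumes pos: "m + n * inv_golden_ratio > 0"
    and conj_nonneg: "m + n * (- 1 - inv_golden_ratio) \<ge> 0"
    and conj_le_4: "m + n * (- 1 - inv_golden_ratio) \<le> 4"
  shows "m + n * inv_golden_ratio \<ge> 1 - inv_golden_ratio"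
proof (rule ccontr)
  let ?r = inv_golden_ratio
  assume small: "\<not> m + n * ?r \<ge> 1 - ?r"
  note r = inv_golden_ratio_bounds
  have "n * (1 + 2 * ?r) < 1 * (1 + 2 * ?r)"
    using small conj_nonneg r by (simp add: algebra_simps)
  then have "n < 1" using r by (simp only: mult_less_cancel_right) auto
  moreover have "(-2) * (1 + 2 * ?r) < n * (1 + 2 * ?r)"
    using pos conj_le_4 r by (simp add: algebra_simps)
  then have "-2 < n" using r by (simp only: mult_less_cancel_right) auto
  ultimately consider "n = 0" | "n = -1" by linarith
  then show False
  proof cases
    case 1
    then show False using pos small r by simp
  next
    case 2
    then have "m \<ge> 1" using pos r by simp
    then show False using small 2 by simp
  qed
qed

lemma norm_OK_elem_ge_inv_golden_ratio:
  assumes "OK_elem a \<noteq> 0" and "cmod (sigma_elem a) \<le> 2"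
  shows "cmod (OK_elem a) \<ge> inv_golden_ratio"
proof -
  obtain m n :: int
    where OK: "(cmod (OK_elem a))\<^sup>2 = m + n * inv_golden_ratio"
      and sigma: "(cmod (sigma_elem a))\<^sup>2 = m + n * (- 1 - inv_golden_ratio)"
    by (rule norm_sq_OK_elem_sigma_elem)
  have sigma_le: "(cmod (sigma_elem a))\<^sup>2 \<le> 2\<^sup>2" using assms(2) by (rule power_mono) simp
  have "(cmod (OK_elem a))\<^sup>2 \<ge> 1 - inv_golden_ratio"
    unfolding OK
  proof (rule golden_integer_gap)
    show "m + n * inv_golden_ratio > 0" unfolding OK[symmetric] using assms(1) by simp
    show "m + n * (- 1 - inv_golden_ratio) \<ge> 0" unfolding sigma[symmetric] by simp
    show "m + n * (- 1 - inv_golden_ratio) \<le> 4" unfolding sigma[symmetric] using sigma_le by simp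
  qed
  then have "(cmod (OK_elem a))\<^sup>2 \<ge> inv_golden_ratio\<^sup>2"
    by (simp add: inv_golden_ratio_sq)
  then show ?thesis by (rule power2_le_imp_le) simp
qed

theorem mainTheorem3:
  assumes "z1 \<in> S_set" and "z2 \<in> S_set" and "z1 \<noteq> z2"
  shows "cmod (z1 - z2) \<ge> (sqrt 5 - 1) / 2"
proof -
  obtain a where a: "z1 = OK_elem a" "cmod (sigma_elem a) \<le> 1"
    using assms(1) unfolding S_set_def by auto
  obtain b where b: "z2 = OK_elem b" "cmod (sigma_elem b) \<le> 1"
    using assms(2) unfolding S_set_def by auto
  define c where "c = (\<lambda>i. a i - b i)"
  have z: "z1 - z2 = OK_elem c" unfolding a b c_def by (rule OK_elem_diff)
  have "OK_elem c \<noteq> 0" using z assms(3) by (metis right_minus_eq)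
  moreover have "cmod (sigma_elem c) \<le> 2"
    using norm_triangle_ineq4[of "sigma_elem a" "sigma_elem b"] a b
    unfolding c_def sigma_elem_diff by simp
  ultimately have "cmod (OK_elem c) \<ge> inv_golden_ratio"
    by (rule norm_OK_elem_ge_inv_golden_ratio)
  then show ?thesis unfolding z inv_golden_ratio_def .
qed

end
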